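(* Let $\chi\in\chi(G)$ be a character and $\lambda\in\Lambda^\chi$. Let $\mathcal M=\{i\in[n]:\langle\chi_i,\lambda\rangle\ge0\}$, and let $A_1,\dots,A_N$ be the subsets of $[n]$ that are minimal with respect to the property $L(A_j)\subset S^\chi_\lambda$. Then $$S^\chi_\lambda=V([n]\setminus\mathcal M)\cap\Big(\bigcup_{j=1}^N D(A_j)\Big)=X_\lambda\cap\Big(\bigcup_{j=1}^ND(A_j)\Big).$$ In particular $S^\chi_\lambda$ is an open subvariety of $X_\lambda$, irreducible, connected and smooth; it is obtained by removing a finite union of linear subspaces from $X_\lambda$, and its Zariski closure is the linear subspace $X_\lambda$.
   Context: $G$ is a diagonalizable algebraic group over $\mathbf C$ acting on $X=\mathbf A^n_{\mathbf C}$ by $g\cdot(x_1,\dots,x_n)=(\chi_1(g)x_1,\dots,\chi_n(g)x_n)$ for fixed characters $\chi_1,\dots,\chi_n$. $\chi(G)$ is the character group, $\Gamma(G)$ the group of one-parameter subgroups, $\langle\chi,\lambda\rangle$ defined by $\chi(\lambda(t))=t^{\langle\chi,\lambda\rangle}$ (extended to real scalars). A norm $\|\cdot\|$ on $\Gamma(G)$ is fixed, induced by an inner product on $\Gamma(G)_{\mathbf R}$ integral on $\Gamma(G)\times\Gamma(G)$. $[n]=\{1,\dots,n\}$. For $x\in X$, $S_x=\{i:x_i\ne0\}$ and $\sigma_x=\{v\in\Gamma(G)_{\mathbf R}:\langle\chi_i,v\rangle\ge0\ \forall i\in S_x\}$; the lattice points of $\sigma_x$ are exactly the $\lambda$ for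 which $\lim_{t\to0}\lambda(t)\cdot x$ exists. $X_\lambda=\{x:\lim_{t\to0}\lambda(t)x\text{ exists}\}=\{x:x_i=0\text{ whenever }\langle\chi_i,\lambda\rangle<0\}$. A point $x$ is $\chi$-unstable if there is $\lambda\in\Gamma(G)$ with $\lim_{t\to0}\lambda(t)x$ existing and $\langle\chi,\lambda\rangle<0$; $X^{us}(\chi)$ is the unstable locus. For $x\in X^{us}(\chi)$ let $\lambda_{\chi,x}$ be the unique indivisible $\lambda\in\Gamma(G)$ with limit existing minimizing $\langle\chi,\lambda\rangle/\|\lambda\|$ over all nonzero such $\lambda$ (Kempf). $\Lambda^\chi=\{\lambda_{\chi,x}:x\in X^{us}(\chi)\}$, $S^\chi_\lambda=\{x\in X^{us}(\chi):\lambda_{\chi,x}=\lambda\}$. For $S\subset[n]$: $V(S)=\{x:x_i=0\ \forall i\in S\}$, $D(S)=\{x:\prod_{i\in S}x_i\ne0\}$, $L(S)=D(S)\cap V([n]\setminus S)$. *)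

theory Defs
  imports "HOL-Analysis.Analysis"
begin

text \<open>A diagonalizable group G with torus part of rank r: the lattice
Gamma(G) of one-parameter subgroups is int^'r; a character is recorded via its
pairing with Gamma(G), i.e. as an element of int^'r (the dual lattice); the pairing
is the dot product. The coordinates of X = A^n are indexed by the finite type 'n
(so [n] = UNIV).\<close>

definition pair :: "int^'r::finite \<Rightarrow> int^'r \<Rightarrow> int" where
  "pair c l = (\<Sum>k\<in>UNIV. c$k * l$k)"

definition act :: "('n::finite \<Rightarrow> int^'r::finite) \<Rightarrow> int^'r \<Rightarrow> complex \<Rightarrow> complex^'n \<Rightarrow> complex^'n" where
  "act chis l t x = (\<chi> i. t powi (pair (chis i) l) * x$i)"

definition lim_exists :: "('n::finite \<Rightarrow> int^'r::finite) \<Rightarrow> int^'r \<Rightarrow> complex^'n \<Rightarrow> bool" where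
  "lim_exists chis l x \<longleftrightarrow> (\<exists>L. ((\<lambda>t. act chis l t x) \<longlongrightarrow> L) (at 0))"

definition X_lam :: "('n::finite \<Rightarrow> int^'r::finite) \<Rightarrow> int^'r \<Rightarrow> (complex^'n) set" where
  "X_lam chis l = {x. lim_exists chis l x}"

definition inner_ok :: "int^'r::finite^'r \<Rightarrow> bool" where
  "inner_ok B \<longleftrightarrow> (\<forall>i j. B$i$j = B$j$i) \<and>
     (\<forall>v::real^'r. v \<noteq> 0 \<longrightarrow> (\<Sum>i\<in>UNIV. \<Sum>j\<in>UNIV. v$i * of_int (B$i$j) * v$j) > 0)"

definition lnorm :: "int^'r::finite^'r \<Rightarrow> int^'r \<Rightarrow> real" where
  "lnorm B l = sqrt (\<Sum>i\<in>UNIV. \<Sum>j\<in>UNIV. of_int (l$i * B$i$j * l$j))"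

definition unstable :: "('n::finite \<Rightarrow> int^'r::finite) \<Rightarrow> int^'r \<Rightarrow> complex^'n \<Rightarrow> bool" where
  "unstable chis c x \<longleftrightarrow> (\<exists>l. lim_exists chis l x \<and> pair c l < 0)"

definition indivisible :: "int^'r::finite \<Rightarrow> bool" where
  "indivisible l \<longleftrightarrow> l \<noteq> 0 \<and> (\<forall>(k::int) m. l = k *s m \<longrightarrow> \<bar>k\<bar> = 1)"

definition kempf_opt :: "('n::finite \<Rightarrow> int^'r::finite) \<Rightarrow> int^'r^'r \<Rightarrow> int^'r \<Rightarrow> complex^'n \<Rightarrow> int^'r \<Rightarrow> bool" where
  "kempf_opt chis B c x l \<longleftrightarrow> l \<noteq> 0 \<and> indivisible l \<and> lim_exists chis l x \<and>
     (\<forall>m. m \<noteq> 0 \<and> lim_exists chis m x \<longrightarrow>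
        of_int (pair c l) / lnorm B l \<le> of_int (pair c m) / lnorm B m)"

definition kempf_ps :: "('n::finite \<Rightarrow> int^'r::finite) \<Rightarrow> int^'r^'r \<Rightarrow> int^'r \<Rightarrow> complex^'n \<Rightarrow> int^'r" where
  "kempf_ps chis B c x = (THE l. kempf_opt chis B c x l)"

definition Lambda_set :: "('n::finite \<Rightarrow> int^'r::finite) \<Rightarrow> int^'r^'r \<Rightarrow> int^'r \<Rightarrow> (int^'r) set" where
  "Lambda_set chis B c = kempf_ps chis B c ` {x. unstable chis c x}"

definition S_strat :: "('n::finite \<Rightarrow> int^'r::finite) \<Rightarrow> int^'r^'r \<Rightarrow> int^'r \<Rightarrow> int^'r \<Rightarrow> (complex^'n) set" where
  "S_strat chis B c l = {x. unstable chis c x \<and> kempf_ps chis B c x = l}"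

definition Vset :: "'n::finite set \<Rightarrow> (complex^'n) set" where
  "Vset S = {x. \<forall>i\<in>S. x$i = 0}"

definition Dset :: "'n::finite set \<Rightarrow> (complex^'n) set" where
  "Dset S = {x. (\<Prod>i\<in>S. x$i) \<noteq> 0}"

definition Lset :: "'n::finite set \<Rightarrow> (complex^'n) set" where
  "Lset S = Dset S \<inter> Vset (UNIV - S)"

end

theory Submission
  imports Defs
begin

text \<open>
  The limit of \<open>\<lambda>(t) x\<close> exists iff \<open>\<langle>\<chi>\<^sub>i, \<lambda>\<rangle> \<ge> 0\<close> for every \<open>i\<close> in the support of \<open>x\<close>.
  Enlarging the support of a point inside \<open>X\<^sub>\<lambda>\<close> therefore only removes admissible
  one-parameter subgroups, so the optimal one of the smaller point stays optimal: the stratum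
  is closed under enlarging supports within the coordinate subspace \<open>X\<^sub>\<lambda>\<close>. Every such
  subset of a coordinate subspace is the union of the sets \<open>X\<^sub>\<lambda> \<inter> D(A)\<close> over its minimal
  supports \<open>A\<close>. Each of these is dense in \<open>X\<^sub>\<lambda>\<close> and the image of a vector space under a
  coordinatewise exponential, and all of them contain the point of \<open>X\<^sub>\<lambda>\<close> whose free
  coordinates are \<open>1\<close>; this gives openness, connectedness and the closure.

  Behind this lies the fact that \<open>\<lambda>\<^sub>\<chi>\<^sub>,\<^sub>x\<close> is well defined. The slope \<open>\<langle>\<chi>, v\<rangle> / \<parallel>v\<parallel>\<close>
  attains its minimum on the rational polyhedral cone \<open>\<sigma>\<^sub>x\<close>. Normalised by \<open>\<langle>\<chi>, v\<rangle> = -1\<close>,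
  the minimiser is the unique solution of its Karush--Kuhn--Tucker system, whose coefficients
  are rational; a \<open>\<rat>\<close>-linear retraction of \<open>\<real>\<close> onto \<open>\<rat>\<close> maps solutions to solutions, so the
  minimiser is rational and spans the ray of an indivisible \<open>\<lambda>\<close>. Equality in the triangle
  inequality forces parallel vectors, which makes this \<open>\<lambda>\<close> unique.
\<close>

section \<open>Limits and supports\<close>

definition supp :: "complex^'n::finite \<Rightarrow> 'n set" where
  "supp x = {i. x$i \<noteq> 0}"

lemma tendsto_powi_mult_at_0_iff:
  fixes x :: complex and k :: int
  shows "(\<exists>L. ((\<lambda>t. t powi k * x) \<longlongrightarrow> L) (at 0)) \<longleftrightarrow> x = 0 \<or> 0 \<le> k"
proof
  assume "\<exists>L. ((\<lambda>t. t powi k * x) \<longlongrightarrow> L) (at 0)"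
  then obtain L where L: "((\<lambda>t. t powi k * x) \<longlongrightarrow> L) (at 0)" by blast
  show "x = 0 \<or> 0 \<le> k"
  proof (rule ccontr)
    assume "\<not> (x = 0 \<or> 0 \<le> k)"
    then have "x \<noteq> 0" "k < 0" by auto
    define n where "n = nat (- k)"
    have "((\<lambda>t. t powi k * x * t ^ n) \<longlongrightarrow> L * 0 ^ n) (at 0)"
      by (intro tendsto_intros L)
    moreover have "\<forall>\<^sub>F t in at 0. t powi k * x * t ^ n = x"
      using eventually_neq_at_within[of 0 0 UNIV]
    proof eventually_elim
      case (elim t)
      then show ?case
        using \<open>k < 0\<close> by (simp add: n_def power_int_def field_simps)
    qed
    ultimately have "((\<lambda>t. x) \<longlongrightarrow> L * 0 ^ n) (at (0::complex))"
      by (rule Lim_transform_eventually)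
    with \<open>x \<noteq> 0\<close> \<open>k < 0\<close> show False by (simp add: n_def tendsto_const_iff)
  qed
next
  assume "x = 0 \<or> 0 \<le> k"
  then have "((\<lambda>t. t powi k * x) \<longlongrightarrow> 0 powi k * x) (at 0)"
  proof
    assume "0 \<le> k"
    have "((\<lambda>t. t ^ nat k * x) \<longlongrightarrow> 0 ^ nat k * x) (at 0)"
      by (intro tendsto_intros)
    with \<open>0 \<le> k\<close> show ?thesis by (simp add: power_int_def)
  qed simp
  then show "\<exists>L. ((\<lambda>t. t powi k * x) \<longlongrightarrow> L) (at 0)" by blast
qed

lemma lim_exists_iff: "lim_exists chis m x \<longleftrightarrow> (\<forall>i\<in>supp x. 0 \<le> pair (chis i) m)"
proof
  assume "lim_exists chis m x"
  then obtain L where "((\<lambda>t. act chis m t x) \<longlongrightarrow> L) (at 0)"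
    by (auto simp: lim_exists_def)
  then have "((\<lambda>t. t powi (pair (chis i) m) * x$i) \<longlongrightarrow> L$i) (at 0)" for i
    unfolding act_def by (auto dest: tendsto_vec_nth[where i = i])
  then have "x$i = 0 \<or> 0 \<le> pair (chis i) m" for i
    using tendsto_powi_mult_at_0_iff by blast
  then show "\<forall>i\<in>supp x. 0 \<le> pair (chis i) m" by (auto simp: supp_def)
next
  assume "\<forall>i\<in>supp x. 0 \<le> pair (chis i) m"
  then have "\<exists>L. ((\<lambda>t. t powi (pair (chis i) m) * x$i) \<longlongrightarrow> L) (at 0)" for i
    by (auto simp: supp_def tendsto_powi_mult_at_0_iff)
  then obtain L where "\<And>i. ((\<lambda>t. t powi (pair (chis i) m) * x$i) \<longlongrightarrow> L i) (at 0)"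
    by metis
  then have "((\<lambda>t. act chis m t x) \<longlongrightarrow> (\<chi> i. L i)) (at 0)"
    unfolding act_def by (rule tendsto_vec_lambda)
  then show "lim_exists chis m x" by (auto simp: lim_exists_def)
qed

lemma mem_Vset_iff: "x \<in> Vset T \<longleftrightarrow> supp x \<inter> T = {}"
  by (auto simp: Vset_def supp_def)

lemma mem_Dset_iff: "x \<in> Dset A \<longleftrightarrow> A \<subseteq> supp x"
  by (auto simp: Dset_def supp_def)

lemma mem_Lset_iff: "x \<in> Lset A \<longleftrightarrow> supp x = A"
  by (auto simp: Lset_def mem_Vset_iff mem_Dset_iff)

lemma supp_indicator_vec: "supp (\<chi> i. (indicator A i :: complex)) = A"
  by (simp add: supp_def indicator_def)

lemma indicator_vec_mem_Lset: "(\<chi> i. (indicator A i :: complex)) \<in> Lset A"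
  by (simp add: mem_Lset_iff supp_indicator_vec)

lemma X_lam_eq_Vset: "X_lam chis l = Vset {i. pair (chis i) l < 0}"
  by (auto simp: X_lam_def set_eq_iff mem_Vset_iff lim_exists_iff disjoint_iff not_less)

section \<open>The Gram form\<close>

definition of_int_vec :: "int^'r::finite \<Rightarrow> real^'r" where
  "of_int_vec v = (\<chi> k. of_int (v$k))"

definition bform :: "int^'r::finite^'r \<Rightarrow> real^'r \<Rightarrow> real^'r \<Rightarrow> real" where
  "bform B v w = (\<Sum>i\<in>UNIV. \<Sum>j\<in>UNIV. v$i * of_int (B$i$j) * w$j)"

definition gnorm :: "int^'r::finite^'r \<Rightarrow> real^'r \<Rightarrow> real" where
  "gnorm B v = sqrt (bform B v v)"

definition gslope :: "int^'r::finite^'r \<Rightarrow> real^'r \<Rightarrow> real^'r \<Rightarrow> real" where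
  "gslope B a v = inner a v / gnorm B v"

lemma inner_of_int_vec: "inner (of_int_vec a) (of_int_vec b) = of_int (pair a b)"
  by (simp add: of_int_vec_def inner_vec_def pair_def)

lemma of_int_vec_eq_0_iff [simp]: "of_int_vec v = 0 \<longleftrightarrow> v = 0"
  by (auto simp: of_int_vec_def vec_eq_iff)

lemma of_int_vec_Rats: "of_int_vec g $ k \<in> \<rat>"
  by (simp add: of_int_vec_def)

lemma of_int_vec_add: "of_int_vec (a + b) = of_int_vec a + of_int_vec b"
  by (auto simp: of_int_vec_def vec_eq_iff)

lemma pair_add_right: "pair a (l + m) = pair a l + pair a m"
  by (simp add: pair_def algebra_simps sum.distrib)

lemma lnorm_eq_gnorm: "lnorm B l = gnorm B (of_int_vec l)"
  by (simp add: lnorm_def gnorm_def bform_def of_int_vec_def)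

lemma pair_div_lnorm: "of_int (pair c m) / lnorm B m = gslope B (of_int_vec c) (of_int_vec m)"
  by (simp add: gslope_def lnorm_eq_gnorm inner_of_int_vec)

lemma bform_pos: "inner_ok B \<Longrightarrow> v \<noteq> 0 \<Longrightarrow> 0 < bform B v v"
  by (simp add: inner_ok_def bform_def)

lemma bform_nonneg: "inner_ok B \<Longrightarrow> 0 \<le> bform B v v"
  using bform_pos[of B v] by (cases "v = 0") (auto simp: bform_def)

lemma bform_eq_0_iff: "inner_ok B \<Longrightarrow> bform B v v = 0 \<longleftrightarrow> v = 0"
  using bform_pos[of B v] by (cases "v = 0") (auto simp: bform_def)

lemma bform_sym: "inner_ok B \<Longrightarrow> bform B v w = bform B w v"
  unfolding bform_def inner_ok_def by (subst sum.swap) (simp add: algebra_simps)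

lemma bform_add_left: "bform B (u + v) w = bform B u w + bform B v w"
  by (simp add: bform_def algebra_simps sum.distrib)

lemma bform_add_right: "bform B w (u + v) = bform B w u + bform B w v"
  by (simp add: bform_def algebra_simps sum.distrib)

lemma bform_scaleR_left: "bform B (t *\<^sub>R u) w = t * bform B u w"
  by (simp add: bform_def algebra_simps sum_distrib_left)

lemma bform_scaleR_right: "bform B w (t *\<^sub>R u) = t * bform B w u"
  by (simp add: bform_def algebra_simps sum_distrib_left)

lemma bform_expand:
  assumes "inner_ok B"
  shows "bform B (v + t *\<^sub>R w) (v + t *\<^sub>R w) = bform B v v + 2 * t * bform B v w + t\<^sup>2 * bform B w w"
  by (simp add: bform_add_left bform_add_right bform_scaleR_left bform_scaleR_right
      bform_sym[OF assms, of w v] power2_eq_square algebra_simps)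

definition bmat :: "int^'r::finite^'r \<Rightarrow> real^'r^'r" where
  "bmat B = (\<chi> i. of_int_vec (B$i))"

lemma bmat_Rats: "bmat B $ i $ j \<in> \<rat>"
  by (simp add: bmat_def of_int_vec_Rats)

lemma bform_eq_inner_bmat: "bform B v w = inner v (bmat B *v w)"
  by (simp add: bform_def bmat_def inner_vec_def matrix_vector_mult_def of_int_vec_def
      sum_distrib_left algebra_simps)

lemma bform_cauchy_schwarz:
  assumes B: "inner_ok B"
  shows "bform B u v \<le> gnorm B u * gnorm B v"
proof (cases "v = 0")
  case True
  then show ?thesis by (simp add: bform_def gnorm_def)
next
  case False
  define b where "b = bform B u v"
  define q where "q = bform B v v"
  have q: "q > 0" using bform_pos[OF B False] by (simp add: q_def)
  have "0 \<le> bform B (u + (- b / q) *\<^sub>R v) (u + (- b / q) *\<^sub>R v)"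
    by (rule bform_nonneg[OF B])
  also have "\<dots> = bform B u u + 2 * (- b / q) * b + (- b / q)\<^sup>2 * q"
    unfolding bform_expand[OF B] b_def q_def ..
  also have "\<dots> = bform B u u - b\<^sup>2 / q"
    using q by (simp add: field_simps power2_eq_square)
  finally have "b\<^sup>2 \<le> bform B u u * q" using q by (simp add: field_simps)
  then have "sqrt (b\<^sup>2) \<le> sqrt (bform B u u * q)" by (rule real_sqrt_le_mono)
  then show ?thesis by (simp add: b_def q_def gnorm_def real_sqrt_mult)
qed

lemma gnorm_pos: "inner_ok B \<Longrightarrow> v \<noteq> 0 \<Longrightarrow> 0 < gnorm B v"
  by (simp add: gnorm_def bform_pos)

lemma gnorm_nonneg: "inner_ok B \<Longrightarrow> 0 \<le> gnorm B v"
  by (simp add: gnorm_def bform_nonneg)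

lemma gnorm_square:
  assumes "inner_ok B"
  shows "(gnorm B v)\<^sup>2 = bform B v v"
  by (simp add: gnorm_def bform_nonneg[OF assms])

lemma gnorm_scaleR: "gnorm B (t *\<^sub>R v) = \<bar>t\<bar> * gnorm B v"
proof -
  have "bform B (t *\<^sub>R v) (t *\<^sub>R v) = t\<^sup>2 * bform B v v"
    by (simp add: bform_scaleR_left bform_scaleR_right power2_eq_square)
  then show ?thesis by (simp add: gnorm_def real_sqrt_mult)
qed

lemma gnorm_triangle:
  assumes B: "inner_ok B"
  shows "gnorm B (u + v) \<le> gnorm B u + gnorm B v"
proof -
  have "(gnorm B (u + v))\<^sup>2 = bform B u u + 2 * bform B u v + bform B v v"
    using bform_expand[OF B, of u 1 v] by (simp add: gnorm_square[OF B])
  also have "\<dots> \<le> (gnorm B u + gnorm B v)\<^sup>2"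
    using bform_cauchy_schwarz[OF B, of u v]
    by (simp add: power2_sum gnorm_square[OF B])
  finally show ?thesis
    by (rule power2_le_imp_le) (simp add: gnorm_nonneg[OF B])
qed

lemma gnorm_triangle_eq_imp_parallel:
  assumes B: "inner_ok B" and eq: "gnorm B (u + v) = gnorm B u + gnorm B v"
  shows "gnorm B v *\<^sub>R u = gnorm B u *\<^sub>R v"
proof -
  have "bform B u u + 2 * bform B u v + bform B v v = (gnorm B u + gnorm B v)\<^sup>2"
    using bform_expand[OF B, of u 1 v] eq by (simp flip: gnorm_square[OF B])
  then have uv: "bform B u v = gnorm B u * gnorm B v"
    by (simp add: power2_sum gnorm_square[OF B])
  have "bform B (gnorm B v *\<^sub>R u + (- gnorm B u) *\<^sub>R v) (gnorm B v *\<^sub>R u + (- gnorm B u) *\<^sub>R v) = 0"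
    unfolding bform_expand[OF B] bform_scaleR_left bform_scaleR_right uv
      gnorm_square[OF B, of u, symmetric] gnorm_square[OF B, of v, symmetric]
    by (simp add: power2_eq_square)
  then have "gnorm B v *\<^sub>R u + (- gnorm B u) *\<^sub>R v = 0"
    by (simp only: bform_eq_0_iff[OF B])
  then show ?thesis by (simp add: algebra_simps)
qed

lemma gslope_scaleR: "0 < t \<Longrightarrow> gslope B a (t *\<^sub>R v) = gslope B a v"
  by (simp add: gslope_def gnorm_scaleR)

section \<open>Indivisible vectors\<close>

lemma indivisible_iff_Gcd: "indivisible l \<longleftrightarrow> Gcd (range (\<lambda>i. l$i)) = 1"
proof
  assume ind: "indivisible l"
  define g where "g = Gcd (range (\<lambda>i. l$i))"
  have "l = g *s (\<chi> i. l$i div g)"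
    by (simp add: vec_eq_iff g_def)
  then have "\<bar>g\<bar> = 1" using ind by (auto simp: indivisible_def)
  then show "g = 1" by (simp add: g_def)
next
  assume gcd: "Gcd (range (\<lambda>i. l$i)) = 1"
  show "indivisible l"
    unfolding indivisible_def
  proof (intro conjI allI impI)
    show "l \<noteq> 0" using gcd by auto
    fix k :: int and m assume "l = k *s m"
    then have "k dvd Gcd (range (\<lambda>i. l$i))" by (auto intro: Gcd_greatest)
    then show "\<bar>k\<bar> = 1" using gcd by simp
  qed
qed

lemma Gcd_range_vec_mult:
  fixes l :: "int^'r::finite"
  assumes "0 \<le> p"
  shows "Gcd (range (\<lambda>i. (p *s l)$i)) = p * Gcd (range (\<lambda>i. l$i))"
  using Gcd_mult[of p "range (\<lambda>i. l$i)"] assms by (simp add: image_image)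

lemma indivisible_eq_if_multiples:
  fixes l1 l2 :: "int^'r::finite"
  assumes "indivisible l1" "indivisible l2" "0 < p" "0 < q" "p *s l1 = q *s l2"
  shows "l1 = l2"
proof -
  have "p = q"
    using Gcd_range_vec_mult[of p l1] Gcd_range_vec_mult[of q l2] assms
    by (simp add: indivisible_iff_Gcd)
  with assms show ?thesis by (simp add: vec_eq_iff)
qed

lemma indivisible_eq_if_real_multiples:
  fixes l1 l2 :: "int^'r::finite"
  assumes ind: "indivisible l1" "indivisible l2" and st: "0 < s" "0 < t"
    and eq: "s *\<^sub>R of_int_vec l1 = t *\<^sub>R of_int_vec l2"
  shows "l1 = l2"
proof -
  define r where "r = s / t"
  have "0 < r" using st by (simp add: r_def)
  have l2: "of_int (l2$i) = r * of_int (l1$i)" for i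
    using eq st by (simp add: r_def vec_eq_iff of_int_vec_def field_simps)
  obtain j where "l1$j \<noteq> 0" using ind(1) by (auto simp: indivisible_def vec_eq_iff)
  have abs_j: "of_int \<bar>l2$j\<bar> = r * of_int \<bar>l1$j\<bar>"
    using l2[of j] \<open>0 < r\<close> by (simp add: abs_mult)
  show ?thesis
  proof (rule indivisible_eq_if_multiples[OF ind, of "\<bar>l2$j\<bar>" "\<bar>l1$j\<bar>"])
    show "0 < \<bar>l1$j\<bar>" using \<open>l1$j \<noteq> 0\<close> by simp
    then have "(0::real) < of_int \<bar>l2$j\<bar>" using abs_j \<open>0 < r\<close> by simp
    then show "0 < \<bar>l2$j\<bar>" by simp
    have "\<bar>l2$j\<bar> * l1$i = \<bar>l1$j\<bar> * l2$i" for i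
    proof -
      have "(of_int (\<bar>l2$j\<bar> * l1$i) :: real) = of_int (\<bar>l1$j\<bar> * l2$i)"
        using abs_j l2[of i] by simp
      then show ?thesis by (simp only: of_int_eq_iff)
    qed
    then show "\<bar>l2$j\<bar> *s l1 = \<bar>l1$j\<bar> *s l2"
      by (simp add: vec_eq_iff)
  qed
qed

lemma rational_vec_common_denominator:
  fixes v :: "real^'r::finite"
  assumes "\<And>k. v$k \<in> \<rat>"
  obtains D w where "0 < D" "of_int_vec w = of_int D *\<^sub>R v"
proof -
  have "\<exists>n::int. 0 < n \<and> of_int n * v$k \<in> \<int>" for k
    using assms[of k] by (elim Rats_cases') auto
  then obtain n where n: "\<And>k. 0 < n k" "\<And>k. of_int (n k) * v$k \<in> \<int>" by metis
  define D where "D = (\<Prod>k\<in>UNIV. n k)"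
  have "of_int D * v$k \<in> \<int>" for k
  proof -
    have "of_int D * v$k = (of_int (n k) * v$k) * of_int (\<Prod>j\<in>UNIV - {k}. n j)"
      by (simp add: D_def prod.remove[of UNIV k])
    then show ?thesis using n(2)[of k] by (metis Ints_mult Ints_of_int)
  qed
  then have "\<forall>k. \<exists>z. of_int D * v$k = of_int z" by (metis Ints_cases)
  then obtain w where "\<And>k. of_int D * v$k = of_int (w k)" by metis
  then have "of_int_vec (\<chi> k. w k) = of_int D *\<^sub>R v"
    by (simp add: of_int_vec_def vec_eq_iff)
  moreover have "0 < D" using n(1) by (simp add: D_def prod_pos)
  ultimately show ?thesis using that by blast
qed

lemma rational_ray_indivisible:
  fixes v :: "real^'r::finite"
  assumes "\<And>k. v$k \<in> \<rat>" "v \<noteq> 0"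
  obtains l t where "indivisible l" "0 < t" "of_int_vec l = t *\<^sub>R v"
proof -
  obtain D w where D: "0 < D" and w: "of_int_vec w = of_int D *\<^sub>R v"
    using rational_vec_common_denominator assms(1) by blast
  define g where "g = Gcd (range (\<lambda>i. w$i))"
  have "of_int_vec w \<noteq> 0" using w D assms(2) by simp
  then have "w \<noteq> 0" by simp
  then have "g \<noteq> 0" by (auto simp: g_def vec_eq_iff)
  then have "0 < g" by (simp add: g_def order_le_neq_trans)
  define l where "l = (\<chi> i. w$i div g)"
  have wl: "w = g *s l" by (simp add: l_def g_def vec_eq_iff)
  then have "Gcd (range (\<lambda>i. l$i)) = 1"
    using Gcd_range_vec_mult[of g l] \<open>0 < g\<close> \<open>g \<noteq> 0\<close> by (simp add: g_def flip: wl)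
  moreover have "of_int_vec l = (of_int D / of_int g) *\<^sub>R v"
    using w wl \<open>0 < g\<close> by (simp add: of_int_vec_def vec_eq_iff field_simps)
  moreover have "0 < of_int D / (of_int g :: real)" using D \<open>0 < g\<close> by simp
  ultimately show ?thesis
    using that by (simp add: indivisible_iff_Gcd)
qed

section \<open>Rationality via \<rat>-linear retractions\<close>

definition rat_linear :: "(real \<Rightarrow> real) \<Rightarrow> bool" where
  "rat_linear \<phi> \<longleftrightarrow> (\<forall>x y. \<phi> (x + y) = \<phi> x + \<phi> y) \<and> (\<forall>q x. \<phi> (of_rat q * x) = of_rat q * \<phi> x)"

lemma rat_linear_mult_Rats: "rat_linear \<phi> \<Longrightarrow> r \<in> \<rat> \<Longrightarrow> \<phi> (r * x) = r * \<phi> x"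
  by (auto simp: rat_linear_def elim: Rats_cases)

lemma rat_linear_sum: "rat_linear \<phi> \<Longrightarrow> \<phi> (\<Sum>s\<in>S. f s) = (\<Sum>s\<in>S. \<phi> (f s))"
  using rat_linear_mult_Rats[of \<phi> 0 0]
  by (induction S rule: infinite_finite_induct) (auto simp: rat_linear_def)

lemma rat_linear_inner:
  assumes "rat_linear \<phi>" "\<And>k. g$k \<in> \<rat>"
  shows "inner g (\<chi> k. \<phi> (v$k)) = \<phi> (inner g v)"
  using assms by (simp add: inner_vec_def rat_linear_sum rat_linear_mult_Rats)

lemma rat_linear_matrix_vector_mult:
  assumes "rat_linear \<phi>" "\<And>i j. A$i$j \<in> \<rat>"
  shows "A *v (\<chi> k. \<phi> (v$k)) = (\<chi> i. \<phi> ((A *v v)$i))"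
  using assms by (simp add: matrix_vector_mult_def vec_eq_iff rat_linear_sum rat_linear_mult_Rats)

lemma rat_linear_span:
  fixes S :: "(real^'r::finite) set"
  assumes \<phi>: "rat_linear \<phi>" and "finite S" and S: "\<And>s k. s \<in> S \<Longrightarrow> s$k \<in> \<rat>"
    and "y \<in> span S"
  shows "(\<chi> k. \<phi> (y$k)) \<in> span S"
proof -
  obtain u where "y = (\<Sum>s\<in>S. u s *\<^sub>R s)"
    using \<open>finite S\<close> \<open>y \<in> span S\<close> by (auto simp: span_finite)
  moreover have "\<phi> (u s * s$k) = s$k * \<phi> (u s)" if "s \<in> S" for s k
    using rat_linear_mult_Rats[OF \<phi> S[OF that]] by (simp add: mult.commute)
  ultimately have "(\<chi> k. \<phi> (y$k)) = (\<Sum>s\<in>S. \<phi> (u s) *\<^sub>R s)"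
    by (simp add: vec_eq_iff rat_linear_sum[OF \<phi>] mult.commute)
  then show ?thesis by (simp add: span_sum span_scale span_base)
qed

lemma rat_linear_retraction_exists: "\<exists>\<phi>. rat_linear \<phi> \<and> \<phi> 1 = 1 \<and> range \<phi> \<subseteq> \<rat>"
proof -
  interpret V: vector_space "\<lambda>q::rat. \<lambda>x::real. of_rat q * x"
    by unfold_locales (auto simp: algebra_simps of_rat_add of_rat_mult)
  interpret P: vector_space_pair "\<lambda>q::rat. \<lambda>x::real. of_rat q * x" "\<lambda>q::rat. \<lambda>x::real. of_rat q * x"
    by unfold_locales
  have "V.independent {1::real}"
    using V.independent_empty by (intro V.independent_insertI) auto
  from P.linear_independent_extend_subspace[OF this, of id]
  obtain \<phi> where \<phi>: "Vector_Spaces.linear (\<lambda>q::rat. \<lambda>x::real. of_rat q * x) (\<lambda>q x. of_rat q * x) \<phi>"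
    "\<phi> 1 = 1" "range \<phi> = V.span {1}"
    by auto
  have "range \<phi> \<subseteq> \<rat>"
    using \<phi>(3) by (auto simp: V.span_singleton)
  with \<phi> show ?thesis
    by (auto simp: rat_linear_def Vector_Spaces.linear_def module_hom_def module_hom_axioms_def)
qed

lemma rational_if_unique_rat_invariant:
  fixes v :: "real^'r::finite"
  assumes "P v" and unique: "\<And>w. P w \<Longrightarrow> w = v"
    and invariant: "\<And>\<phi> w. rat_linear \<phi> \<Longrightarrow> \<phi> 1 = 1 \<Longrightarrow> P w \<Longrightarrow> P (\<chi> k. \<phi> (w$k))"
  shows "v$k \<in> \<rat>"
proof -
  obtain \<phi> where "rat_linear \<phi>" "\<phi> 1 = 1" "range \<phi> \<subseteq> \<rat>"
    using rat_linear_retraction_exists by blast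
  with assms have "(\<chi> k. \<phi> (v$k)) = v" by blast
  then have "v$k = \<phi> (v$k)" by (metis vec_lambda_beta)
  with \<open>range \<phi> \<subseteq> \<rat>\<close> show ?thesis by (metis range_subsetD)
qed

section \<open>Minimising the slope on a polyhedral cone\<close>

lemma in_span_if_orthogonal_to_annihilator:
  fixes y :: "'a::euclidean_space"
  assumes "\<And>w. \<forall>g\<in>G. inner g w = 0 \<Longrightarrow> inner y w = 0"
  shows "y \<in> span G"
proof -
  have "y \<in> (span G)\<^sup>\<bottom>\<^sup>\<bottom>"
    using assms by (auto simp: orthogonal_comp_def orthogonal_def inner_commute span_base)
  then show ?thesis by (simp add: orthogonal_comp_self)
qed

lemma bform_min_first_order:
  fixes G :: "(real^'r::finite) set"
  assumes B: "inner_ok B" and "finite G"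
    and vs: "\<forall>g\<in>G. 0 \<le> inner g vs"
    and min: "\<And>v. \<forall>g\<in>G. 0 \<le> inner g v \<Longrightarrow> inner a v = inner a vs \<Longrightarrow> bform B vs vs \<le> bform B v v"
    and w: "inner a w = 0" "\<And>g. g \<in> G \<Longrightarrow> inner g vs = 0 \<Longrightarrow> inner g w = 0"
  shows "bform B vs w = 0"
proof -
  have "\<forall>\<^sub>F t in nhds 0. 0 \<le> inner g (vs + t *\<^sub>R w)" if "g \<in> G" for g
  proof (cases "inner g vs = 0")
    case True
    then show ?thesis using w(2)[OF that] by (simp add: inner_add_right)
  next
    case False
    then have "0 < inner g (vs + 0 *\<^sub>R w)" using vs that by (simp add: order_le_neq_trans)
    moreover have "((\<lambda>t. inner g (vs + t *\<^sub>R w)) \<longlongrightarrow> inner g (vs + 0 *\<^sub>R w)) (at 0)"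
      by (intro tendsto_intros)
    ultimately have "\<forall>\<^sub>F t in at 0. 0 < inner g (vs + t *\<^sub>R w)"
      by (rule order_tendstoD(1)[rotated])
    with \<open>0 < inner g (vs + 0 *\<^sub>R w)\<close> show ?thesis
      by (auto simp: eventually_nhds_conv_at elim: eventually_mono)
  qed
  then have "\<forall>\<^sub>F t in nhds 0. \<forall>g\<in>G. 0 \<le> inner g (vs + t *\<^sub>R w)"
    using \<open>finite G\<close> by (simp add: eventually_ball_finite)
  then obtain d where "0 < d" and feasible: "\<And>t. \<bar>t\<bar> < d \<Longrightarrow> \<forall>g\<in>G. 0 \<le> inner g (vs + t *\<^sub>R w)"
    by (auto simp: eventually_nhds_metric dist_real_def)
  define q where "q t = bform B (vs + t *\<^sub>R w) (vs + t *\<^sub>R w)" for t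
  have "q 0 \<le> q t" if "\<bar>0 - t\<bar> < d" for t
  proof -
    have "inner a (vs + t *\<^sub>R w) = inner a vs" using w(1) by (simp add: inner_add_right)
    with feasible[of t] that show ?thesis unfolding q_def by (simp add: min)
  qed
  moreover have "(q has_real_derivative 2 * bform B vs w) (at 0)"
    unfolding q_def bform_expand[OF B, abs_def] by (auto intro!: derivative_eq_intros)
  ultimately have "2 * bform B vs w = 0"
    using \<open>0 < d\<close> by (intro DERIV_local_min[of q]) auto
  then show ?thesis by simp
qed

lemma bmat_span_unique:
  fixes H :: "(real^'r::finite) set"
  assumes B: "inner_ok B" and "bmat B *v v \<in> span H" "bmat B *v w \<in> span H"
    and "\<forall>g\<in>H. inner g v = inner g w"
  shows "v = w"
proof -
  have "bmat B *v (v - w) \<in> span H"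
    using assms(2,3) by (simp add: matrix_vector_mult_diff_distrib span_diff)
  moreover have "orthogonal (v - w) g" if "g \<in> H" for g
    using assms(4) that by (simp add: orthogonal_def inner_diff_left inner_diff_right inner_commute[of _ g])
  ultimately have "orthogonal (v - w) (bmat B *v (v - w))" by (rule orthogonal_to_span)
  then have "bform B (v - w) (v - w) = 0" by (simp add: bform_eq_inner_bmat orthogonal_def)
  then show ?thesis by (simp add: bform_eq_0_iff[OF B])
qed

lemma bform_min_multipliers:
  fixes G :: "(real^'r::finite) set"
  assumes B: "inner_ok B" and "finite G"
    and vs: "\<forall>g\<in>G. 0 \<le> inner g vs"
    and min: "\<And>v. \<forall>g\<in>G. 0 \<le> inner g v \<Longrightarrow> inner a v = inner a vs \<Longrightarrow> bform B vs vs \<le> bform B v v"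
  shows "bmat B *v vs \<in> span (insert a {g\<in>G. inner g vs = 0})"
proof (rule in_span_if_orthogonal_to_annihilator)
  fix w assume w: "\<forall>g\<in>insert a {g\<in>G. inner g vs = 0}. inner g w = 0"
  have "inner (bmat B *v vs) w = bform B w vs"
    by (simp add: bform_eq_inner_bmat inner_commute)
  also have "\<dots> = bform B vs w"
    by (rule bform_sym[OF B])
  also have "\<dots> = 0"
    using bform_min_first_order[OF B \<open>finite G\<close> vs min] w by auto
  finally show "inner (bmat B *v vs) w = 0" .
qed

lemma bform_min_on_slice_rational:
  fixes G :: "(real^'r::finite) set"
  assumes B: "inner_ok B" and "finite G"
    and rat: "\<And>g k. g \<in> insert a G \<Longrightarrow> g$k \<in> \<rat>"
    and vs: "\<forall>g\<in>G. 0 \<le> inner g vs" "inner a vs = -1"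
    and min: "\<And>v. \<forall>g\<in>G. 0 \<le> inner g v \<Longrightarrow> inner a v = -1 \<Longrightarrow> bform B vs vs \<le> bform B v v"
  shows "vs$k \<in> \<rat>"
proof -
  define H where "H = insert a {g\<in>G. inner g vs = 0}"
  define P where "P v \<longleftrightarrow> bmat B *v v \<in> span H \<and> (\<forall>g\<in>H. inner g v = inner g vs)" for v
  have "finite H" using \<open>finite G\<close> by (simp add: H_def)
  have ratH: "\<And>g k. g \<in> H \<Longrightarrow> g$k \<in> \<rat>" using rat by (auto simp: H_def)
  have "P vs"
    using bform_min_multipliers[OF B \<open>finite G\<close> vs(1), of a] min vs(2) by (simp add: P_def H_def)
  moreover have "v = vs" if "P v" for v
    using bmat_span_unique[OF B, of v H vs] that \<open>P vs\<close> by (simp add: P_def)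
  moreover have "P (\<chi> k. \<phi> (v$k))" if \<phi>: "rat_linear \<phi>" "\<phi> 1 = 1" and "P v" for \<phi> v
  proof -
    have "bmat B *v (\<chi> k. \<phi> (v$k)) = (\<chi> i. \<phi> ((bmat B *v v)$i))"
      using \<phi>(1) bmat_Rats by (rule rat_linear_matrix_vector_mult)
    also have "\<dots> \<in> span H"
      using rat_linear_span[OF \<phi>(1) \<open>finite H\<close> ratH] \<open>P v\<close> by (simp add: P_def)
    finally have "bmat B *v (\<chi> k. \<phi> (v$k)) \<in> span H" .
    moreover have "inner g (\<chi> k. \<phi> (v$k)) = inner g vs" if "g \<in> H" for g
    proof -
      have "inner g vs \<in> \<rat>" using that vs(2) by (auto simp: H_def)
      then have "\<phi> (inner g vs) = inner g vs"
        using rat_linear_mult_Rats[OF \<phi>(1), of "inner g vs" 1] \<phi>(2) by simp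
      then show ?thesis using rat_linear_inner[OF \<phi>(1) ratH[OF that]] \<open>P v\<close> that by (simp add: P_def)
    qed
    ultimately show ?thesis by (simp add: P_def)
  qed
  ultimately show ?thesis by (rule rational_if_unique_rat_invariant)
qed

lemma gslope_attains_min:
  fixes K :: "(real^'r::finite) set"
  assumes B: "inner_ok B" and "closed K" "cone K" "v0 \<in> K" "v0 \<noteq> 0"
  obtains u where "u \<in> K" "u \<noteq> 0" "\<And>v. v \<in> K \<Longrightarrow> v \<noteq> 0 \<Longrightarrow> gslope B a u \<le> gslope B a v"
proof -
  define S where "S = K \<inter> sphere 0 1"
  have normalize: "(1 / norm v) *\<^sub>R v \<in> S" if "v \<in> K" "v \<noteq> 0" for v
    using \<open>cone K\<close> that by (simp add: S_def cone_def)
  have "compact S" using \<open>closed K\<close> by (simp add: S_def closed_Int_compact)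
  moreover have "S \<noteq> {}" using normalize[OF \<open>v0 \<in> K\<close> \<open>v0 \<noteq> 0\<close>] by blast
  moreover have "continuous_on S (gslope B a)"
    unfolding gslope_def[abs_def]
  proof (rule continuous_on_divide)
    show "continuous_on S (gnorm B)"
      unfolding gnorm_def[abs_def] bform_def by (intro continuous_intros)
    show "\<forall>v\<in>S. gnorm B v \<noteq> 0"
    proof
      fix v assume "v \<in> S"
      then have "v \<noteq> 0" by (auto simp: S_def)
      then show "gnorm B v \<noteq> 0" using gnorm_pos[OF B] by fastforce
    qed
  qed (intro continuous_intros)
  ultimately obtain u where "u \<in> S" and u: "\<And>v. v \<in> S \<Longrightarrow> gslope B a u \<le> gslope B a v"
    using continuous_attains_inf[of S "gslope B a"] by auto
  show ?thesis
  proof (rule that)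
    show "u \<in> K" "u \<noteq> 0" using \<open>u \<in> S\<close> by (auto simp: S_def)
    fix v assume "v \<in> K" "v \<noteq> 0"
    then have "gslope B a u \<le> gslope B a ((1 / norm v) *\<^sub>R v)"
      by (intro u normalize)
    also have "\<dots> = gslope B a v"
      using \<open>v \<noteq> 0\<close> by (simp add: gslope_scaleR)
    finally show "gslope B a u \<le> gslope B a v" .
  qed
qed

lemma gslope_min_normalized:
  fixes K :: "(real^'r::finite) set"
  assumes B: "inner_ok B" and "closed K" "cone K" "v0 \<in> K" "inner a v0 < 0"
  obtains vs where "vs \<in> K" "inner a vs = -1"
    and "\<And>v. v \<in> K \<Longrightarrow> v \<noteq> 0 \<Longrightarrow> gslope B a vs \<le> gslope B a v"
    and "\<And>v. v \<in> K \<Longrightarrow> inner a v = -1 \<Longrightarrow> bform B vs vs \<le> bform B v v"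
proof -
  have "v0 \<noteq> 0" using assms(5) by auto
  obtain u where u: "u \<in> K" "u \<noteq> 0"
    and u_min: "\<And>v. v \<in> K \<Longrightarrow> v \<noteq> 0 \<Longrightarrow> gslope B a u \<le> gslope B a v"
    using gslope_attains_min[OF B assms(2-4) \<open>v0 \<noteq> 0\<close>] by blast
  have "gslope B a u \<le> gslope B a v0" by (rule u_min[OF assms(4) \<open>v0 \<noteq> 0\<close>])
  also have "\<dots> < 0"
    using assms(5) gnorm_pos[OF B \<open>v0 \<noteq> 0\<close>] by (simp add: gslope_def divide_neg_pos)
  finally have "inner a u < 0"
    using gnorm_pos[OF B u(2)] by (simp add: gslope_def divide_less_0_iff)
  define vs where "vs = (- 1 / inner a u) *\<^sub>R u"
  have pos: "0 < - 1 / inner a u" using \<open>inner a u < 0\<close> by (simp add: divide_neg_neg)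
  have "vs \<in> K"
    using \<open>cone K\<close> u(1) less_imp_le[OF pos] unfolding cone_def vs_def by blast
  have "inner a vs = -1" using \<open>inner a u < 0\<close> by (simp add: vs_def)
  have slope_vs: "gslope B a vs = gslope B a u"
    unfolding vs_def using pos by (rule gslope_scaleR)
  have "bform B vs vs \<le> bform B v v" if "v \<in> K" "inner a v = -1" for v
  proof -
    have "v \<noteq> 0" "vs \<noteq> 0" using that \<open>inner a vs = -1\<close> by auto
    then have "- 1 / gnorm B vs \<le> - 1 / gnorm B v"
      using u_min[OF that(1)] slope_vs that(2) \<open>inner a vs = -1\<close> by (simp add: gslope_def)
    then have "gnorm B vs \<le> gnorm B v"
      using gnorm_pos[OF B \<open>v \<noteq> 0\<close>] gnorm_pos[OF B \<open>vs \<noteq> 0\<close>] by (simp add: field_simps)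
    then show ?thesis by (simp add: gnorm_def)
  qed
  with that \<open>vs \<in> K\<close> \<open>inner a vs = -1\<close> u_min slope_vs show ?thesis by simp
qed

lemma gslope_neg_min_parallel:
  assumes B: "inner_ok B" and "u \<noteq> 0" "v \<noteq> 0"
    and eq: "gslope B a v = gslope B a u" and neg: "gslope B a u < 0"
    and min: "u + v \<noteq> 0 \<Longrightarrow> gslope B a u \<le> gslope B a (u + v)"
  shows "gnorm B v *\<^sub>R u = gnorm B u *\<^sub>R v"
proof -
  define \<mu> where "\<mu> = gslope B a u"
  have gpos: "0 < gnorm B u" "0 < gnorm B v" using gnorm_pos[OF B] assms(2,3) by auto
  have au: "inner a u = \<mu> * gnorm B u"
    using gpos by (simp add: \<mu>_def gslope_def)
  have av: "inner a v = \<mu> * gnorm B v"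
    using gpos eq by (simp add: \<mu>_def gslope_def field_simps)
  have "inner a u < 0" "inner a v < 0"
    using au av gpos neg by (simp_all add: \<mu>_def mult_neg_pos)
  then have "inner a (u + v) < 0" by (simp add: inner_add_right)
  then have "u + v \<noteq> 0" by auto
  then have "\<mu> \<le> gslope B a (u + v)" and "0 < gnorm B (u + v)"
    using min gnorm_pos[OF B] by (auto simp: \<mu>_def)
  then have "\<mu> * gnorm B (u + v) \<le> inner a (u + v)"
    by (simp add: gslope_def le_divide_eq)
  also have "\<dots> = \<mu> * (gnorm B u + gnorm B v)"
    by (simp add: au av algebra_simps)
  finally have "gnorm B u + gnorm B v \<le> gnorm B (u + v)"
    using neg by (simp add: \<mu>_def)
  with gnorm_triangle[OF B, of u v] show ?thesis
    by (intro gnorm_triangle_eq_imp_parallel[OF B]) simp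
qed

section \<open>Kempf's optimal one-parameter subgroup\<close>

definition sigma_cone :: "('n::finite \<Rightarrow> int^'r::finite) \<Rightarrow> complex^'n \<Rightarrow> (real^'r) set" where
  "sigma_cone chis x = {v. \<forall>i\<in>supp x. 0 \<le> inner (of_int_vec (chis i)) v}"

lemma lim_exists_iff_sigma_cone: "lim_exists chis m x \<longleftrightarrow> of_int_vec m \<in> sigma_cone chis x"
  by (simp add: lim_exists_iff sigma_cone_def inner_of_int_vec)

lemma closed_sigma_cone: "closed (sigma_cone chis x)"
  unfolding sigma_cone_def Ball_def
  by (intro closed_Collect_all closed_Collect_imp open_Collect_const closed_Collect_le continuous_intros)

lemma scaleR_mem_sigma_cone: "v \<in> sigma_cone chis x \<Longrightarrow> 0 \<le> t \<Longrightarrow> t *\<^sub>R v \<in> sigma_cone chis x"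
  by (simp add: sigma_cone_def)

lemma cone_sigma_cone: "cone (sigma_cone chis x)"
  by (simp add: cone_def scaleR_mem_sigma_cone)

lemma kempf_opt_slope_le:
  "kempf_opt chis B c x l \<Longrightarrow> m \<noteq> 0 \<Longrightarrow> lim_exists chis m x \<Longrightarrow>
    gslope B (of_int_vec c) (of_int_vec l) \<le> gslope B (of_int_vec c) (of_int_vec m)"
  by (simp add: kempf_opt_def flip: pair_div_lnorm)

lemma kempf_opt_pair_neg:
  assumes B: "inner_ok B" and "unstable chis c x" and opt: "kempf_opt chis B c x l"
  shows "pair c l < 0"
proof -
  obtain m where m: "lim_exists chis m x" "pair c m < 0"
    using \<open>unstable chis c x\<close> by (auto simp: unstable_def)
  then have "m \<noteq> 0" by (auto simp: pair_def)
  have "gslope B (of_int_vec c) (of_int_vec l) \<le> gslope B (of_int_vec c) (of_int_vec m)"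
    by (rule kempf_opt_slope_le[OF opt \<open>m \<noteq> 0\<close> m(1)])
  also have "\<dots> < 0"
    using m(2) gnorm_pos[OF B] \<open>m \<noteq> 0\<close> by (simp add: gslope_def inner_of_int_vec divide_neg_pos)
  finally show ?thesis
    using gnorm_pos[OF B, of "of_int_vec l"] opt
    by (simp add: kempf_opt_def gslope_def inner_of_int_vec divide_less_0_iff)
qed

lemma kempf_opt_exists:
  assumes B: "inner_ok B" and "unstable chis c x"
  shows "\<exists>l. kempf_opt chis B c x l"
proof -
  define a where "a = of_int_vec c"
  obtain m0 where "lim_exists chis m0 x" "pair c m0 < 0"
    using \<open>unstable chis c x\<close> by (auto simp: unstable_def)
  then have "of_int_vec m0 \<in> sigma_cone chis x" "inner a (of_int_vec m0) < 0"
    by (simp_all add: a_def lim_exists_iff_sigma_cone inner_of_int_vec)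
  then obtain vs where vs: "vs \<in> sigma_cone chis x" "inner a vs = -1"
    and slope_min: "\<And>v. v \<in> sigma_cone chis x \<Longrightarrow> v \<noteq> 0 \<Longrightarrow> gslope B a vs \<le> gslope B a v"
    and bform_min: "\<And>v. v \<in> sigma_cone chis x \<Longrightarrow> inner a v = -1 \<Longrightarrow> bform B vs vs \<le> bform B v v"
    using gslope_min_normalized[OF B closed_sigma_cone cone_sigma_cone] by blast
  have "vs$k \<in> \<rat>" for k
  proof (rule bform_min_on_slice_rational[OF B])
    show "\<And>g k. g \<in> insert a (of_int_vec ` chis ` supp x) \<Longrightarrow> g$k \<in> \<rat>"
      by (auto simp: a_def of_int_vec_Rats)
  qed (use vs bform_min in \<open>auto simp: sigma_cone_def\<close>)
  moreover have "vs \<noteq> 0" using vs(2) by auto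
  ultimately obtain l t where l: "indivisible l" "0 < t" "of_int_vec l = t *\<^sub>R vs"
    using rational_ray_indivisible by blast
  have "kempf_opt chis B c x l"
    unfolding kempf_opt_def pair_div_lnorm
  proof (intro conjI allI impI)
    show "l \<noteq> 0" "indivisible l" using l(1) by (auto simp: indivisible_def)
    show "lim_exists chis l x"
      using vs(1) l by (simp add: lim_exists_iff_sigma_cone scaleR_mem_sigma_cone)
    fix m assume "m \<noteq> 0 \<and> lim_exists chis m x"
    then show "gslope B (of_int_vec c) (of_int_vec l) \<le> gslope B (of_int_vec c) (of_int_vec m)"
      using slope_min l by (simp add: a_def gslope_scaleR lim_exists_iff_sigma_cone)
  qed
  then show ?thesis ..
qed

lemma kempf_opt_unique:
  assumes B: "inner_ok B" and "unstable chis c x"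
    and opt: "kempf_opt chis B c x l1" "kempf_opt chis B c x l2"
  shows "l1 = l2"
proof -
  define a where "a = of_int_vec c"
  have l: "l1 \<noteq> 0" "l2 \<noteq> 0" "lim_exists chis l1 x" "lim_exists chis l2 x"
    "indivisible l1" "indivisible l2"
    using opt by (auto simp: kempf_opt_def)
  have "gslope B a (of_int_vec l2) = gslope B a (of_int_vec l1)"
    using kempf_opt_slope_le[OF opt(1) l(2,4)] kempf_opt_slope_le[OF opt(2) l(1,3)]
    by (simp add: a_def)
  moreover have "gslope B a (of_int_vec l1) < 0"
    using kempf_opt_pair_neg[OF B \<open>unstable chis c x\<close> opt(1)] gnorm_pos[OF B] l(1)
    by (simp add: a_def gslope_def inner_of_int_vec divide_neg_pos)
  moreover have "gslope B a (of_int_vec l1) \<le> gslope B a (of_int_vec l1 + of_int_vec l2)"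
    if "of_int_vec l1 + of_int_vec l2 \<noteq> 0"
    using kempf_opt_slope_le[OF opt(1), of "l1 + l2"] that l(3,4)
    by (simp add: a_def lim_exists_iff pair_add_right flip: of_int_vec_add)
  ultimately have "gnorm B (of_int_vec l2) *\<^sub>R of_int_vec l1 = gnorm B (of_int_vec l1) *\<^sub>R of_int_vec l2"
    using l(1,2) by (intro gslope_neg_min_parallel[OF B]) auto
  moreover have "0 < gnorm B (of_int_vec l1)" "0 < gnorm B (of_int_vec l2)"
    using gnorm_pos[OF B] l(1,2) by simp_all
  ultimately show ?thesis
    using indivisible_eq_if_real_multiples[OF l(5,6)] by blast
qed

lemma kempf_ps_eq:
  assumes "inner_ok B" "unstable chis c x" "kempf_opt chis B c x l"
  shows "kempf_ps chis B c x = l"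
  unfolding kempf_ps_def using assms kempf_opt_unique by blast

lemma kempf_opt_kempf_ps:
  assumes "inner_ok B" "unstable chis c x"
  shows "kempf_opt chis B c x (kempf_ps chis B c x)"
  using kempf_opt_exists[OF assms] kempf_ps_eq[OF assms] by auto

section \<open>Support-closed subsets of coordinate subspaces\<close>

definition minimal_Lsets :: "(complex^'n::finite) set \<Rightarrow> 'n set set" where
  "minimal_Lsets S = {A. Lset A \<subseteq> S \<and> (\<forall>A'. A' \<subset> A \<longrightarrow> \<not> Lset A' \<subseteq> S)}"

definition supp_upclosed :: "'n::finite set \<Rightarrow> (complex^'n) set \<Rightarrow> bool" where
  "supp_upclosed T S \<longleftrightarrow> S \<subseteq> Vset T \<and> (\<forall>y\<in>S. \<forall>x\<in>Vset T. supp y \<subseteq> supp x \<longrightarrow> x \<in> S)"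

lemma supp_upclosed_Lset_disjoint:
  assumes "supp_upclosed T S" "Lset A \<subseteq> S"
  shows "A \<inter> T = {}"
proof -
  have "(\<chi> i. (indicator A i :: complex)) \<in> Vset T"
    using assms indicator_vec_mem_Lset by (auto simp: supp_upclosed_def)
  then show ?thesis by (simp add: mem_Vset_iff supp_indicator_vec)
qed

lemma supp_upclosed_eq_Union_minimal:
  assumes "supp_upclosed T S"
  shows "S = Vset T \<inter> (\<Union>A\<in>minimal_Lsets S. Dset A)"
proof (intro equalityI subsetI)
  fix x assume "x \<in> S"
  then have "x \<in> Vset T" using assms by (auto simp: supp_upclosed_def)
  define F where "F = {A. A \<subseteq> supp x \<and> Lset A \<subseteq> S}"
  have "supp x \<in> F"
    using assms \<open>x \<in> S\<close> \<open>x \<in> Vset T\<close>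
    by (auto simp: F_def supp_upclosed_def mem_Lset_iff mem_Vset_iff)
  then obtain A where "A \<in> F" "\<And>A'. A' \<in> F \<Longrightarrow> A' \<subseteq> A \<Longrightarrow> A = A'"
    using finite_has_minimal2[of F "supp x"] by auto
  then have "A \<in> minimal_Lsets S"
    by (auto simp: F_def minimal_Lsets_def)
  moreover have "x \<in> Dset A" using \<open>A \<in> F\<close> by (simp add: F_def mem_Dset_iff)
  ultimately show "x \<in> Vset T \<inter> (\<Union>A\<in>minimal_Lsets S. Dset A)"
    using \<open>x \<in> Vset T\<close> by blast
next
  fix x assume "x \<in> Vset T \<inter> (\<Union>A\<in>minimal_Lsets S. Dset A)"
  then obtain A where "x \<in> Vset T" "x \<in> Dset A" "Lset A \<subseteq> S" by (auto simp: minimal_Lsets_def)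
  then show "x \<in> S"
    using assms indicator_vec_mem_Lset[of A]
    by (auto simp: supp_upclosed_def mem_Dset_iff supp_indicator_vec)
qed

lemma supp_upclosed_eq_diff_Union_Vset:
  assumes "supp_upclosed T S"
  shows "\<exists>\<V>. finite \<V> \<and> (\<forall>W\<in>\<V>. \<exists>T'. W = Vset T') \<and> S = Vset T - \<Union>\<V>"
proof (intro exI conjI)
  define \<V> where "\<V> = Vset ` {T'. Vset T' \<inter> S = {}}"
  show "finite \<V>" "\<forall>W\<in>\<V>. \<exists>T'. W = Vset T'" by (auto simp: \<V>_def)
  show "S = Vset T - \<Union>\<V>"
  proof (intro equalityI subsetI)
    fix x assume x: "x \<in> Vset T - \<Union>\<V>"
    moreover have "x \<in> Vset (- supp x)" by (simp add: mem_Vset_iff)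
    ultimately obtain y where "y \<in> S" "y \<in> Vset (- supp x)" by (auto simp: \<V>_def)
    then have "supp y \<subseteq> supp x" by (auto simp: mem_Vset_iff)
    then show "x \<in> S"
      using assms x \<open>y \<in> S\<close> unfolding supp_upclosed_def by blast
  qed (use assms in \<open>auto simp: supp_upclosed_def \<V>_def\<close>)
qed

lemma connected_Vset_Int_Dset:
  fixes A :: "'n::finite set"
  assumes "A \<inter> T = {}"
  shows "connected (Vset T \<inter> Dset A)"
proof -
  define \<Phi> :: "complex^'n \<Rightarrow> complex^'n" where
    "\<Phi> z = (\<chi> i. if i \<in> T then 0 else if i \<in> A then exp (z$i) else z$i)" for z
  have "continuous_on UNIV \<Phi>"
    unfolding \<Phi>_def
  proof (intro continuous_on_vec_lambda)
    fix i
    show "continuous_on UNIV (\<lambda>z::complex^'n. if i \<in> T then 0 else if i \<in> A then exp (z$i) else z$i)"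
      by (cases "i \<in> T"; cases "i \<in> A") (simp_all add: continuous_on_exp continuous_on_component)
  qed
  then have "connected (range \<Phi>)" by (intro connected_continuous_image) auto
  moreover have "range \<Phi> = Vset T \<inter> Dset A"
  proof (intro equalityI subsetI)
    fix y assume "y \<in> Vset T \<inter> Dset A"
    then have "\<Phi> (\<chi> i. if i \<in> A then Ln (y$i) else y$i) = y"
      using assms by (auto simp: \<Phi>_def vec_eq_iff mem_Vset_iff mem_Dset_iff supp_def)
    then show "y \<in> range \<Phi>" by (metis rangeI)
  qed (use assms in \<open>auto simp: \<Phi>_def mem_Vset_iff mem_Dset_iff supp_def disjoint_iff\<close>)
  ultimately show ?thesis by simp
qed

lemma connected_Vset_Int_Union_Dset:
  fixes \<A> :: "'n::finite set set"
  assumes "\<forall>A\<in>\<A>. A \<inter> T = {}"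
  shows "connected (Vset T \<inter> (\<Union>A\<in>\<A>. Dset A))"
proof (cases "\<A> = {}")
  case False
  have "Vset T \<inter> (\<Union>A\<in>\<A>. Dset A) = (\<Union>A\<in>\<A>. Vset T \<inter> Dset A)" by blast
  moreover have "connected (\<Union>A\<in>\<A>. Vset T \<inter> Dset A)"
  proof (rule connected_Union)
    show "connected S" if "S \<in> (\<lambda>A. Vset T \<inter> Dset A) ` \<A>" for S
      using that assms connected_Vset_Int_Dset by blast
    have "(\<chi> i. indicator (- T) i) \<in> Vset T \<inter> Dset A" if "A \<in> \<A>" for A
      using assms that by (auto simp: mem_Vset_iff mem_Dset_iff supp_indicator_vec)
    with False show "\<Inter> ((\<lambda>A. Vset T \<inter> Dset A) ` \<A>) \<noteq> {}" by blast
  qed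
  ultimately show ?thesis by simp
qed simp

lemma closed_Vset: "closed (Vset T)"
  unfolding Vset_def Ball_def
  by (intro closed_Collect_all closed_Collect_imp open_Collect_const closed_Collect_eq continuous_intros)

lemma open_Dset: "open (Dset A)"
  unfolding Dset_def by (intro open_Collect_neq continuous_intros)

lemma closure_Vset_Int_Dset:
  fixes A :: "'n::finite set"
  assumes "A \<inter> T = {}"
  shows "closure (Vset T \<inter> Dset A) = Vset T"
proof (rule antisym)
  show "closure (Vset T \<inter> Dset A) \<subseteq> Vset T"
    by (rule closure_minimal[OF Int_lower1 closed_Vset])
  show "Vset T \<subseteq> closure (Vset T \<inter> Dset A)"
  proof
    fix x :: "complex^'n" assume x: "x \<in> Vset T"
    define y where "y t = x + t *\<^sub>R (\<chi> i. indicator A i)" for t :: real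
    have y_nth: "y t $ i = x$i + (if i \<in> A then of_real t else 0)" for t i
      by (simp add: y_def indicator_def of_real_def)
    have lim: "(y \<longlongrightarrow> x) (at 0)" unfolding y_def by (intro tendsto_eq_intros) auto
    have "\<forall>\<^sub>F t in at 0. y t \<in> Vset T \<inter> Dset A"
    proof -
      have "\<forall>\<^sub>F t in at 0. \<forall>i\<in>A. t \<noteq> - Re (x$i)"
        by (simp add: eventually_ball_finite eventually_neq_at_within)
      then show ?thesis
      proof eventually_elim
        case (elim t)
        have "x$i + of_real t \<noteq> 0" if "i \<in> A" for i
        proof
          assume "x$i + of_real t = 0"
          then have "Re (x$i + of_real t) = Re 0" by (rule arg_cong)
          with elim that show False by auto
        qed
        then show ?case
          using x assms by (auto simp: y_nth mem_Vset_iff mem_Dset_iff supp_def disjoint_iff)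
      qed
    qed
    then have "\<forall>\<^sub>F t in at 0. y t \<in> closure (Vset T \<inter> Dset A)"
      using closure_subset by (rule eventually_mono[OF _ subsetD])
    then show "x \<in> closure (Vset T \<inter> Dset A)"
      using Lim_in_closed_set[OF closed_closure _ at_neq_bot lim] by blast
  qed
qed

lemma closure_Vset_Int_Union_Dset:
  fixes \<A> :: "'n::finite set set"
  assumes "A \<in> \<A>" and "\<forall>A\<in>\<A>. A \<inter> T = {}"
  shows "closure (Vset T \<inter> (\<Union>A\<in>\<A>. Dset A)) = Vset T"
proof (rule antisym)
  show "closure (Vset T \<inter> (\<Union>A\<in>\<A>. Dset A)) \<subseteq> Vset T"
    by (simp add: closure_minimal closed_Vset)
  have "Vset T = closure (Vset T \<inter> Dset A)"
    using assms by (simp add: closure_Vset_Int_Dset)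
  also have "\<dots> \<subseteq> closure (Vset T \<inter> (\<Union>A\<in>\<A>. Dset A))"
    using assms(1) by (intro closure_mono) blast
  finally show "Vset T \<subseteq> closure (Vset T \<inter> (\<Union>A\<in>\<A>. Dset A))" .
qed

section \<open>The stratum\<close>

lemma kempf_opt_of_mem_S_strat:
  "inner_ok B \<Longrightarrow> x \<in> S_strat chis B c l \<Longrightarrow> kempf_opt chis B c x l"
  using kempf_opt_kempf_ps by (auto simp: S_strat_def)

lemma S_strat_subset_X_lam: "inner_ok B \<Longrightarrow> S_strat chis B c l \<subseteq> X_lam chis l"
  using kempf_opt_of_mem_S_strat by (fastforce simp: X_lam_def kempf_opt_def)

lemma S_strat_supp_mono:
  assumes B: "inner_ok B" and y: "y \<in> S_strat chis B c l"
    and x: "x \<in> X_lam chis l" and supp: "supp y \<subseteq> supp x"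
  shows "x \<in> S_strat chis B c l"
proof -
  have "unstable chis c y" and opt_y: "kempf_opt chis B c y l"
    using y kempf_opt_of_mem_S_strat[OF B] by (auto simp: S_strat_def)
  have "lim_exists chis l x" using x by (simp add: X_lam_def)
  moreover have "pair c l < 0"
    using kempf_opt_pair_neg[OF B \<open>unstable chis c y\<close> opt_y] .
  ultimately have "unstable chis c x" by (auto simp: unstable_def)
  moreover have "lim_exists chis m y" if "lim_exists chis m x" for m
    using that supp by (auto simp: lim_exists_iff)
  then have "kempf_opt chis B c x l"
    using opt_y \<open>lim_exists chis l x\<close> unfolding kempf_opt_def by blast
  ultimately show ?thesis by (simp add: S_strat_def kempf_ps_eq[OF B])
qed

lemma supp_upclosed_S_strat:
  "inner_ok B \<Longrightarrow> supp_upclosed {i. pair (chis i) l < 0} (S_strat chis B c l)"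
  using S_strat_subset_X_lam S_strat_supp_mono by (simp add: supp_upclosed_def flip: X_lam_eq_Vset) blast

theorem theorem3p17:
  fixes chis :: "'n::finite \<Rightarrow> int^'r::finite"
    and B :: "int^'r^'r" and c l :: "int^'r"
  assumes "inner_ok B"
    and "l \<in> Lambda_set chis B c"
  shows "let M = {i. pair (chis i) l \<ge> 0};
             Amin = {A. Lset A \<subseteq> S_strat chis B c l \<and>
                        (\<forall>A'. A' \<subset> A \<longrightarrow> \<not> Lset A' \<subseteq> S_strat chis B c l)}
         in S_strat chis B c l = Vset (UNIV - M) \<inter> (\<Union>A\<in>Amin. Dset A)
          \<and> S_strat chis B c l = X_lam chis l \<inter> (\<Union>A\<in>Amin. Dset A)
          \<and> openin (top_of_set (X_lam chis l)) (S_strat chis B c l)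
          \<and> (\<exists>\<V>. finite \<V> \<and> (\<forall>W\<in>\<V>. \<exists>T. W = Vset T) \<and>
                 S_strat chis B c l = X_lam chis l - \<Union>\<V>)
          \<and> connected (S_strat chis B c l)
          \<and> closure (S_strat chis B c l) = X_lam chis l"
proof -
  define S where "S = S_strat chis B c l"
  define T where "T = UNIV - {i. pair (chis i) l \<ge> 0}"
  have T_eq: "T = {i. pair (chis i) l < 0}" by (auto simp: T_def)
  have X: "X_lam chis l = Vset T" by (simp add: X_lam_eq_Vset T_eq)
  have up: "supp_upclosed T S" using supp_upclosed_S_strat[OF assms(1)] by (simp add: S_def T_eq)
  have S_eq: "S = Vset T \<inter> (\<Union>A\<in>minimal_Lsets S. Dset A)"
    by (rule supp_upclosed_eq_Union_minimal[OF up])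
  have disj: "\<forall>A\<in>minimal_Lsets S. A \<inter> T = {}"
    using supp_upclosed_Lset_disjoint[OF up] by (auto simp: minimal_Lsets_def)
  obtain A where "A \<in> minimal_Lsets S"
    using assms(2) S_eq by (auto simp: Lambda_set_def S_def S_strat_def)
  have "openin (top_of_set (Vset T)) S"
    by (subst S_eq) (intro openin_open_Int open_UN ballI open_Dset)
  moreover have "connected S"
    by (subst S_eq) (rule connected_Vset_Int_Union_Dset[OF disj])
  moreover have "closure S = Vset T"
    by (subst S_eq) (rule closure_Vset_Int_Union_Dset[OF \<open>A \<in> minimal_Lsets S\<close> disj])
  moreover have "\<exists>\<V>. finite \<V> \<and> (\<forall>W\<in>\<V>. \<exists>T'. W = Vset T') \<and> S = Vset T - \<Union>\<V>"
    by (rule supp_upclosed_eq_diff_Union_Vset[OF up])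
  ultimately show ?thesis
    using S_eq unfolding Let_def X
    unfolding S_def[symmetric] T_def[symmetric] minimal_Lsets_def[symmetric] by blast
qed

end
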